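(* Let $\nu$ be a distribution on $[0,1]$ with density bounded by some constant $M>0$. Then the regret of the Follow-the-Mean algorithm satisfies, for every time horizon $T\ge 2$, \[R_T\le \frac12+\frac M4\big(1+\ln(T-1)\big).\]
   Context: Brokerage setting: for $p,v_1,v_2\in[0,1]$ let $\mathrm{gft}(p,v_1,v_2):=(v_1\vee v_2-v_1\wedge v_2)\,\mathbb I\{v_1\wedge v_2\le p\le v_1\vee v_2\}$ ($\vee,\wedge$ = max, min). Traders' valuations $V_1,V_2,\dots$ are i.i.d. with law $\nu$ on $[0,1]$. At each round $t\in\mathbb N$ the learner posts a price $P_t\in[0,1]$ and obtains $\mathrm{GFT}_t(P_t)$, where $\mathrm{GFT}_t(q):=\mathrm{gft}(q,V_{2t-1},V_{2t})$; in the full-feedback model $V_{2t-1},V_{2t}$ are revealed after round $t$. The regret at horizon $T$ is $R_T:=\sup_{p\in[0,1]}\mathbb E[\sum_{t=1}^T\mathrm{GFT}_t(p)]-\mathbb E[\sum_{t=1}^T\mathrm{GFT}_t(P_t)]$. The Follow-the-Mean (FTM) algorithm posts $P_1:=1/2$ and, for $t\ge2$, $P_t:=\frac{1}{2(t-1)}\sum_{s=1}^{2(t-1)}V_s$. "Density bounded by $M$" means absolutely continuous w.r.t. Lebesgue measure with density $f\le M$. *)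

theory Defs
  imports "HOL-Probability.Probability"
begin

definition gft :: "real \<Rightarrow> real \<Rightarrow> real \<Rightarrow> real" where
  "gft p v1 v2 = (max v1 v2 - min v1 v2) *
     (if min v1 v2 \<le> p \<and> p \<le> max v1 v2 then 1 else 0)"

text \<open>GFT_t(q) = gft(q, V_(2t-1), V_(2t)); rounds and valuations are 1-indexed.\<close>
definition GFT :: "(nat \<Rightarrow> 'a \<Rightarrow> real) \<Rightarrow> nat \<Rightarrow> real \<Rightarrow> 'a \<Rightarrow> real" where
  "GFT V t q \<omega> = gft q (V (2*t - 1) \<omega>) (V (2*t) \<omega>)"

definition ftm_price :: "(nat \<Rightarrow> 'a \<Rightarrow> real) \<Rightarrow> nat \<Rightarrow> 'a \<Rightarrow> real" where
  "ftm_price V t \<omega> = (if t \<le> 1 then 1/2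
     else (\<Sum>s=1..2*(t-1). V s \<omega>) / real (2*(t-1)))"

definition regret :: "'a measure \<Rightarrow> (nat \<Rightarrow> 'a \<Rightarrow> real) \<Rightarrow> (nat \<Rightarrow> 'a \<Rightarrow> real) \<Rightarrow> nat \<Rightarrow> real" where
  "regret \<Omega> V P T =
     (SUP p\<in>{0..1}. \<Sum>t=1..T. integral\<^sup>L \<Omega> (GFT V t p))
     - (\<Sum>t=1..T. integral\<^sup>L \<Omega> (\<lambda>\<omega>. GFT V t (P t \<omega>) \<omega>))"

end

theory Submission
  imports Defs
begin

text \<open>For independent valuations with mean \<open>\<mu>\<close>, the expected gain from trade at a fixed price \<open>p\<close> is
  \<open>2 H(p)\<close> with \<open>H(p) = E (p - V)\<^sup>+ + P(V \<le> p) (\<mu> - p)\<close>. Since \<open>H(\<mu>) - H(q)\<close> is the integral of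
  \<open>\<mu> - x\<close> over the values between \<open>q\<close> and \<open>\<mu>\<close>, \<open>H\<close> is maximal at \<open>\<mu>\<close>, where \<open>H(\<mu>) \<le> \<mu>(1 - \<mu>) \<le> 1/4\<close>,
  and a density bounded by \<open>M\<close> gives \<open>H(\<mu>) - H(q) \<le> M (q - \<mu>)\<^sup>2 / 2\<close>. The FTM price of round \<open>t \<ge> 2\<close>
  is the mean of \<open>2(t - 1)\<close> earlier valuations, independent of the two traders of round \<open>t\<close>, so that
  round loses at most \<open>M E(P\<^sub>t - \<mu>)\<^sup>2 \<le> M / (8(t - 1))\<close> against the best fixed price; the first round
  loses at most \<open>2 H(\<mu>) \<le> 1/2\<close>, and the harmonic sum is at most \<open>1 + ln (T - 1)\<close>.\<close>

lemma gft_nonneg: "0 \<le> gft p x y"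
  unfolding gft_def by auto

lemma abs_gft_le_1: "0 \<le> x \<Longrightarrow> x \<le> 1 \<Longrightarrow> 0 \<le> y \<Longrightarrow> y \<le> 1 \<Longrightarrow> \<bar>gft p x y\<bar> \<le> 1"
  unfolding gft_def by (auto simp: max_def min_def)

lemma borel_measurable_gft[measurable]:
  assumes [measurable]: "f \<in> borel_measurable M" "g \<in> borel_measurable M" "h \<in> borel_measurable M"
  shows "(\<lambda>x. gft (f x) (g x) (h x)) \<in> borel_measurable M"
  unfolding gft_def by measurable

text \<open>The gain \<open>b - s\<close> (if \<open>s \<le> p \<le> b\<close>, else 0) of a seller valuing \<open>s\<close> and a buyer valuing \<open>b\<close>,
  written as a sum of products so that its expectation factorises under independence.\<close>
definition trade_gain :: "real \<Rightarrow> real \<Rightarrow> real \<Rightarrow> real" where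
  "trade_gain p s b = indicator {..p} s * max 0 (b - p) + max 0 (p - s) * indicator {p..} b"

lemma gft_eq_trade_gain: "gft p x y = trade_gain p x y + trade_gain p y x"
  unfolding gft_def trade_gain_def by (auto simp: indicator_def max_def min_def)

lemma mult_one_minus_le_quarter: "x * (1 - x) \<le> (1/4 :: real)"
  using zero_le_power2[of "x - 1/2"] by (simp add: power2_eq_square algebra_simps)

lemma harmonic_le_one_plus_ln:
  assumes "2 \<le> T"
  shows "(\<Sum>t=2..T. 1 / (real t - 1)) \<le> 1 + ln (real T - 1)"
  using assms
proof (induction T rule: nat_induct_at_least)
  case base
  then show ?case by simp
next
  case (Suc T)
  have T: "2 \<le> real T" using Suc.hyps by simp
  have "ln ((real T - 1) / real T) \<le> (real T - 1) / real T - 1"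
    using T by (intro ln_le_minus_one) auto
  moreover have "ln ((real T - 1) / real T) = ln (real T - 1) - ln (real T)"
    using T by (intro ln_divide_pos) auto
  moreover have "(real T - 1) / real T - 1 = - (1 / real T)"
    using T by (simp add: diff_divide_distrib)
  ultimately have "1 / real T \<le> ln (real T) - ln (real T - 1)" by linarith
  then show ?case using Suc.IH Suc.hyps by simp
qed

lemma lborel_integral_Icc_dist_right:
  fixes a b :: real
  assumes "a \<le> b"
  shows "(\<integral>x. indicator {a..b} x *\<^sub>R (b - x) \<partial>lborel) = (b - a)^2 / 2"
proof -
  have "(\<integral>x. indicator {a..b} x *\<^sub>R (b - x) \<partial>lborel) = (\<lambda>x. b*x - x^2/2) b - (\<lambda>x. b*x - x^2/2) a"
  proof (rule integral_FTC_atLeastAtMost[OF assms])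
    fix x
    show "((\<lambda>x. b*x - x^2/2) has_vector_derivative (b - x)) (at x within {a..b})"
      unfolding has_real_derivative_iff_has_vector_derivative[symmetric]
      by (auto intro!: derivative_eq_intros simp: power2_eq_square field_simps)
  qed (intro continuous_intros)
  then show ?thesis by (simp add: power2_eq_square field_simps)
qed

lemma lborel_integral_Icc_dist_left:
  fixes a b :: real
  assumes "a \<le> b"
  shows "(\<integral>x. indicator {a..b} x *\<^sub>R (x - a) \<partial>lborel) = (b - a)^2 / 2"
proof -
  have "(\<integral>x. indicator {a..b} x *\<^sub>R (x - a) \<partial>lborel) = (\<lambda>x. (x - a)^2/2) b - (\<lambda>x. (x - a)^2/2) a"
  proof (rule integral_FTC_atLeastAtMost[OF assms])
    fix x
    show "((\<lambda>x. (x - a)^2/2) has_vector_derivative (x - a)) (at x within {a..b})"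
      unfolding has_real_derivative_iff_has_vector_derivative[symmetric]
      by (auto intro!: derivative_eq_intros simp: power2_eq_square field_simps)
  qed (intro continuous_intros)
  then show ?thesis by simp
qed

lemma integral_density_Ioc_le:
  fixes f g :: "real \<Rightarrow> real"
  assumes f: "f \<in> borel_measurable borel" "\<And>x. 0 \<le> f x" "\<And>x. f x \<le> c"
    and g: "g \<in> borel_measurable borel" "continuous_on {a..b} g" "\<And>x. a \<le> x \<Longrightarrow> x \<le> b \<Longrightarrow> 0 \<le> g x"
  shows "(\<integral>x. indicator {a<..b} x * g x \<partial>density lborel f) \<le> c * (\<integral>x. indicator {a..b} x *\<^sub>R g x \<partial>lborel)"
proof -
  have c: "0 \<le> c" using f(2,3)[of 0] by linarith
  have bound: "f x * (indicator {a<..b} x * g x) \<le> c * (indicator {a..b} x * g x)" for x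
    using f(2,3)[of x] g(3)[of x] c by (auto simp: indicator_def intro!: mult_right_mono)
  have int_g: "integrable lborel (\<lambda>x. c * (indicator {a..b} x * g x))"
    using borel_integrable_atLeastAtMost'[OF g(2)] by (simp add: set_integrable_def)
  have int_fg: "integrable lborel (\<lambda>x. f x * (indicator {a<..b} x * g x))"
  proof (rule Bochner_Integration.integrable_bound[OF int_g])
    show "(\<lambda>x. f x * (indicator {a<..b} x * g x)) \<in> borel_measurable lborel"
      using f(1) g(1) by measurable
    show "AE x in lborel. norm (f x * (indicator {a<..b} x * g x)) \<le> norm (c * (indicator {a..b} x * g x))"
    proof (rule AE_I2)
      fix x
      show "norm (f x * (indicator {a<..b} x * g x)) \<le> norm (c * (indicator {a..b} x * g x))"
        using f(2)[of x] g(3)[of x] bound[of x] by (auto simp: indicator_def)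
    qed
  qed
  have "(\<integral>x. indicator {a<..b} x * g x \<partial>density lborel f) = (\<integral>x. f x * (indicator {a<..b} x * g x) \<partial>lborel)"
    using f g(1) by (subst integral_density) auto
  also have "\<dots> \<le> (\<integral>x. c * (indicator {a..b} x * g x) \<partial>lborel)"
    by (rule integral_mono[OF int_fg int_g bound])
  finally show ?thesis by simp
qed

lemma measure_density_lborel_singleton:
  fixes f :: "real \<Rightarrow> real"
  assumes "f \<in> borel_measurable borel"
  shows "measure (density lborel f) {p} = 0"
proof -
  have "AE x in lborel. x \<in> {p} \<longrightarrow> f x = 0"
    using AE_lborel_singleton[of p] by eventually_elim simp
  then have "{p} \<in> null_sets (density lborel f)"
    using assms by (simp add: null_sets_density_iff)
  then show ?thesis by (simp add: measure_def null_setsD1)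
qed

text \<open>\<open>indep_var\<close> forces \<open>X\<close> and \<open>Y\<close> to share their codomain type; below they are restrictions of
  the valuation sequence to disjoint index sets.\<close>
lemma (in prob_space) integral_indep_var_compose:
  fixes \<phi> :: "'b \<Rightarrow> 'b \<Rightarrow> real"
  assumes XY: "indep_var N1 X N2 Y"
    and \<phi>: "case_prod \<phi> \<in> borel_measurable (N1 \<Otimes>\<^sub>M N2)"
    and int: "integrable M (\<lambda>\<omega>. \<phi> (X \<omega>) (Y \<omega>))"
  shows "integrable M (\<lambda>\<omega>. \<integral>\<omega>'. \<phi> (X \<omega>) (Y \<omega>') \<partial>M)"
    and "(\<integral>\<omega>. \<phi> (X \<omega>) (Y \<omega>) \<partial>M) = (\<integral>\<omega>. (\<integral>\<omega>'. \<phi> (X \<omega>) (Y \<omega>') \<partial>M) \<partial>M)"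
proof -
  have X: "X \<in> measurable M N1" and Y: "Y \<in> measurable M N2"
    using indep_var_rv1[OF XY] indep_var_rv2[OF XY] by auto
  define DX where "DX = distr M N1 X"
  define DY where "DY = distr M N2 Y"
  interpret DX: prob_space DX unfolding DX_def by (rule prob_space_distr[OF X])
  interpret DY: prob_space DY unfolding DY_def by (rule prob_space_distr[OF Y])
  interpret DXY: pair_prob_space DX DY ..
  have XY_meas: "(\<lambda>\<omega>. (X \<omega>, Y \<omega>)) \<in> measurable M (N1 \<Otimes>\<^sub>M N2)"
    using X Y by (rule measurable_Pair)
  have joint: "DX \<Otimes>\<^sub>M DY = distr M (N1 \<Otimes>\<^sub>M N2) (\<lambda>\<omega>. (X \<omega>, Y \<omega>))"
    using XY[unfolded indep_var_distribution_eq] unfolding DX_def DY_def by blast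
  have int_DXY: "integrable (DX \<Otimes>\<^sub>M DY) (case_prod \<phi>)"
    unfolding joint using int by (subst integrable_distr_eq[OF XY_meas \<phi>]) simp
  have outer_meas: "(\<lambda>x. \<integral>y. \<phi> x y \<partial>DY) \<in> borel_measurable N1"
    by (rule DY.borel_measurable_lebesgue_integral) (use \<phi> in \<open>simp add: DY_def\<close>)
  have int_DX: "integrable DX (\<lambda>x. \<integral>y. \<phi> x y \<partial>DY)"
    using DXY.integrable_fst'[OF int_DXY] by simp
  have fubini: "integral\<^sup>L (DX \<Otimes>\<^sub>M DY) (case_prod \<phi>) = (\<integral>x. (\<integral>y. \<phi> x y \<partial>DY) \<partial>DX)"
    using DXY.integral_fst'[OF int_DXY] by simp
  have inner_X: "(\<integral>y. \<phi> (X \<omega>) y \<partial>DY) = (\<integral>\<omega>'. \<phi> (X \<omega>) (Y \<omega>') \<partial>M)" if "\<omega> \<in> space M" for \<omega>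
    unfolding DY_def using measurable_Pair2[OF \<phi> measurable_space[OF X that]]
    by (subst integral_distr[OF Y]) simp_all
  have "integrable M (\<lambda>\<omega>. \<integral>y. \<phi> (X \<omega>) y \<partial>DY)"
    using int_DX unfolding DX_def integrable_distr_eq[OF X outer_meas] .
  moreover have "integrable M (\<lambda>\<omega>. \<integral>y. \<phi> (X \<omega>) y \<partial>DY)
      \<longleftrightarrow> integrable M (\<lambda>\<omega>. \<integral>\<omega>'. \<phi> (X \<omega>) (Y \<omega>') \<partial>M)"
    by (rule Bochner_Integration.integrable_cong) (simp_all add: inner_X)
  ultimately show "integrable M (\<lambda>\<omega>. \<integral>\<omega>'. \<phi> (X \<omega>) (Y \<omega>') \<partial>M)" by blast
  have "(\<integral>\<omega>. \<phi> (X \<omega>) (Y \<omega>) \<partial>M) = integral\<^sup>L (DX \<Otimes>\<^sub>M DY) (case_prod \<phi>)"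
    unfolding joint by (subst integral_distr[OF XY_meas \<phi>]) simp
  also have "\<dots> = (\<integral>x. (\<integral>y. \<phi> x y \<partial>DY) \<partial>DX)"
    by (rule fubini)
  also have "\<dots> = (\<integral>\<omega>. (\<integral>y. \<phi> (X \<omega>) y \<partial>DY) \<partial>M)"
    unfolding DX_def by (rule integral_distr[OF X outer_meas])
  also have "\<dots> = (\<integral>\<omega>. (\<integral>\<omega>'. \<phi> (X \<omega>) (Y \<omega>') \<partial>M) \<partial>M)"
    by (rule Bochner_Integration.integral_cong[OF refl inner_X])
  finally show "(\<integral>\<omega>. \<phi> (X \<omega>) (Y \<omega>) \<partial>M) = (\<integral>\<omega>. (\<integral>\<omega>'. \<phi> (X \<omega>) (Y \<omega>') \<partial>M) \<partial>M)" .
qed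


locale unit_interval_prob = prob_space M for M :: "real measure" +
  assumes sets_eq_borel: "sets M = sets borel"
    and AE_unit_interval: "AE x in M. 0 \<le> x \<and> x \<le> 1"
begin

lemma integrable_bounded_on_unit_interval:
  fixes g :: "real \<Rightarrow> real"
  assumes "g \<in> borel_measurable borel" and "\<And>x. 0 \<le> x \<Longrightarrow> x \<le> 1 \<Longrightarrow> \<bar>g x\<bar> \<le> B"
  shows "integrable M g"
proof (rule integrable_const_bound[where B=B])
  show "AE x in M. norm (g x) \<le> B"
    using AE_unit_interval by eventually_elim (use assms(2) in auto)
  show "g \<in> borel_measurable M"
    using assms(1) by (simp add: measurable_cong_sets[OF sets_eq_borel refl])
qed

lemma integrable_id: "integrable M (\<lambda>x. x)"
  by (rule integrable_bounded_on_unit_interval[where B=1]) auto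

lemma mean_nonneg: "0 \<le> expectation (\<lambda>x. x)"
  using AE_unit_interval by (intro integral_nonneg_AE) auto

lemma mean_le_1: "expectation (\<lambda>x. x) \<le> 1"
proof -
  have "expectation (\<lambda>x. x) \<le> expectation (\<lambda>x. 1)"
    using AE_unit_interval by (intro integral_mono_AE integrable_id) auto
  then show ?thesis by (simp add: prob_space)
qed

lemma variance_le_quarter: "variance (\<lambda>x. x) \<le> 1/4"
proof -
  define \<mu> where "\<mu> = expectation (\<lambda>x. x)"
  have "variance (\<lambda>x. x) \<le> expectation (\<lambda>x. x * (1 - 2*\<mu>) + \<mu>^2)"
    unfolding \<mu>_def[symmetric]
  proof (rule integral_mono_AE)
    show "integrable M (\<lambda>x. (x - \<mu>)^2)"
    proof (rule integrable_bounded_on_unit_interval[where B="(1 + \<bar>\<mu>\<bar>)^2"])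
      fix x :: real
      assume "0 \<le> x" "x \<le> 1"
      then have "\<bar>x - \<mu>\<bar>^2 \<le> (1 + \<bar>\<mu>\<bar>)^2" by (intro power_mono) auto
      then show "\<bar>(x - \<mu>)^2\<bar> \<le> (1 + \<bar>\<mu>\<bar>)^2" by simp
    qed simp
    show "integrable M (\<lambda>x. x * (1 - 2*\<mu>) + \<mu>^2)"
      using integrable_id by simp
    show "AE x in M. (x - \<mu>)^2 \<le> x * (1 - 2*\<mu>) + \<mu>^2"
      using AE_unit_interval
    proof eventually_elim
      case (elim x)
      then have "x * x \<le> x" using mult_left_le[of x x] by simp
      then show ?case by (simp add: power2_eq_square algebra_simps)
    qed
  qed
  also have "\<dots> = \<mu> * (1 - \<mu>)"
    using integrable_id by (simp add: \<mu>_def prob_space algebra_simps power2_eq_square)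
  also have "\<dots> \<le> 1/4" by (rule mult_one_minus_le_quarter)
  finally show ?thesis .
qed

end

lemma unit_interval_prob_density:
  fixes f :: "real \<Rightarrow> real"
  assumes "prob_space (density lborel f)" and "measure (density lborel f) {0..1} = 1"
  shows "unit_interval_prob (density lborel f)"
proof -
  have "AE x in density lborel f. 0 \<le> x \<and> x \<le> 1"
    using prob_space.AE_prob_1[OF assms] by simp
  then show ?thesis
    using assms(1) by (simp add: unit_interval_prob_def unit_interval_prob_axioms_def)
qed

text \<open>For \<open>\<mu>\<close> the mean of \<open>\<nu>\<close>, \<open>2 * gft_profile \<nu> \<mu> p\<close> is the expected gain from trade at price \<open>p\<close>
  (lemma \<open>integral_GFT\<close>).\<close>
definition gft_profile :: "real measure \<Rightarrow> real \<Rightarrow> real \<Rightarrow> real" where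
  "gft_profile \<nu> \<mu> p = (\<integral>x. max 0 (p - x) + indicator {..p} x * (\<mu> - p) \<partial>\<nu>)"

context unit_interval_prob
begin

lemma gft_profile_diff:
  assumes "q \<le> p"
  shows "gft_profile M \<mu> p - gft_profile M \<mu> q = (\<integral>x. indicator {q<..p} x * (\<mu> - x) \<partial>M)"
proof -
  have int: "integrable M (\<lambda>x. max 0 (r - x) + indicator {..r} x * (\<mu> - r))" for r
    by (rule integrable_bounded_on_unit_interval[where B="\<bar>r\<bar> + 1 + \<bar>\<mu> - r\<bar>"])
      (auto simp: indicator_def)
  have "gft_profile M \<mu> p - gft_profile M \<mu> q
      = (\<integral>x. (max 0 (p - x) + indicator {..p} x * (\<mu> - p)) - (max 0 (q - x) + indicator {..q} x * (\<mu> - q)) \<partial>M)"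
    unfolding gft_profile_def by (rule Bochner_Integration.integral_diff[symmetric, OF int int])
  also have "\<dots> = (\<integral>x. indicator {q<..p} x * (\<mu> - x) \<partial>M)"
    using assms by (intro Bochner_Integration.integral_cong) (auto simp: indicator_def)
  finally show ?thesis .
qed

lemma integral_Ioc_mult_minus:
  "(\<integral>x. indicator {a<..b} x * (x - \<mu>) \<partial>M) = - (\<integral>x. indicator {a<..b} x * (\<mu> - x) \<partial>M)"
  by (subst integral_minus[symmetric]) (auto intro!: Bochner_Integration.integral_cong simp: algebra_simps)

lemma gft_profile_le: "gft_profile M \<mu> p \<le> gft_profile M \<mu> \<mu>"
proof (cases "p \<le> \<mu>")
  case True
  have "0 \<le> (\<integral>x. indicator {p<..\<mu>} x * (\<mu> - x) \<partial>M)"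
    by (intro integral_nonneg_AE) (auto simp: indicator_def)
  then show ?thesis using gft_profile_diff[OF True, of \<mu>] by linarith
next
  case False
  have "0 \<le> (\<integral>x. indicator {\<mu><..p} x * (x - \<mu>) \<partial>M)"
    by (intro integral_nonneg_AE) (auto simp: indicator_def)
  then show ?thesis
    using gft_profile_diff[of \<mu> p \<mu>] False integral_Ioc_mult_minus[of \<mu> p \<mu>] by linarith
qed

lemma gft_profile_mean_le_quarter:
  defines "\<mu> \<equiv> expectation (\<lambda>x. x)"
  shows "gft_profile M \<mu> \<mu> \<le> 1/4"
proof -
  have "gft_profile M \<mu> \<mu> = expectation (\<lambda>x. max 0 (\<mu> - x))"
    unfolding gft_profile_def by simp
  also have "\<dots> \<le> expectation (\<lambda>x. \<mu> * (1 - x))"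
  proof (rule integral_mono_AE)
    show "integrable M (\<lambda>x. max 0 (\<mu> - x))"
      by (rule integrable_bounded_on_unit_interval[where B="\<bar>\<mu>\<bar> + 1"]) auto
    show "integrable M (\<lambda>x. \<mu> * (1 - x))"
      using integrable_id by simp
    show "AE x in M. max 0 (\<mu> - x) \<le> \<mu> * (1 - x)"
      using AE_unit_interval
    proof eventually_elim
      case (elim x)
      then show ?case
        using mean_nonneg mean_le_1 mult_left_le[of \<mu> x] mult_left_le[of x \<mu>]
        by (auto simp: \<mu>_def algebra_simps max_def mult.commute)
    qed
  qed
  also have "\<dots> = \<mu> * (1 - \<mu>)"
    using integrable_id by (simp add: \<mu>_def prob_space)
  also have "\<dots> \<le> 1/4" by (rule mult_one_minus_le_quarter)
  finally show ?thesis .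
qed

lemma gft_profile_quadratic_loss:
  fixes f :: "real \<Rightarrow> real"
  assumes M_eq: "M = density lborel f"
    and f: "f \<in> borel_measurable borel" "\<And>x. 0 \<le> f x" "\<And>x. f x \<le> c"
  shows "gft_profile M \<mu> \<mu> - gft_profile M \<mu> q \<le> c * (q - \<mu>)^2 / 2"
proof (cases "q \<le> \<mu>")
  case True
  have "(\<integral>x. indicator {q<..\<mu>} x * (\<mu> - x) \<partial>M) \<le> c * (\<integral>x. indicator {q..\<mu>} x *\<^sub>R (\<mu> - x) \<partial>lborel)"
    unfolding M_eq by (rule integral_density_Ioc_le[OF f]) (auto intro!: continuous_intros)
  also have "\<dots> = c * (\<mu> - q)^2 / 2"
    using lborel_integral_Icc_dist_right[OF True] by simp
  finally show ?thesis using gft_profile_diff[OF True, of \<mu>] by (simp add: power2_commute)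
next
  case False
  then have "\<mu> \<le> q" by simp
  have "(\<integral>x. indicator {\<mu><..q} x * (x - \<mu>) \<partial>M) \<le> c * (\<integral>x. indicator {\<mu>..q} x *\<^sub>R (x - \<mu>) \<partial>lborel)"
    unfolding M_eq by (rule integral_density_Ioc_le[OF f]) (auto intro!: continuous_intros)
  also have "\<dots> = c * (q - \<mu>)^2 / 2"
    using lborel_integral_Icc_dist_left[OF \<open>\<mu> \<le> q\<close>] by simp
  finally show ?thesis
    using gft_profile_diff[OF \<open>\<mu> \<le> q\<close>, of \<mu>] integral_Ioc_mult_minus[of \<mu> q \<mu>] by simp
qed

end

context unit_interval_prob
begin

lemma gft_profile_eq_trade_gain_factors:
  assumes no_atom: "measure M {p} = 0"
  shows "expectation (indicator {..p}) * expectation (\<lambda>x. max 0 (x - p))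
       + expectation (\<lambda>x. max 0 (p - x)) * expectation (indicator {p..})
       = gft_profile M (expectation (\<lambda>x. x)) p"
proof -
  define \<mu> where "\<mu> = expectation (\<lambda>x. x)"
  define F where "F = expectation (indicator {..p} :: real \<Rightarrow> real)"
  define A where "A = expectation (\<lambda>x. max 0 (x - p))"
  define B where "B = expectation (\<lambda>x. max 0 (p - x))"
  have int_F: "integrable M (indicator {..p} :: real \<Rightarrow> real)"
    by (rule integrable_bounded_on_unit_interval[where B=1]) (auto simp: indicator_def)
  have int_A: "integrable M (\<lambda>x. max 0 (x - p))"
    by (rule integrable_bounded_on_unit_interval[where B="\<bar>p\<bar> + 1"]) auto
  have int_B: "integrable M (\<lambda>x. max 0 (p - x))"
    by (rule integrable_bounded_on_unit_interval[where B="\<bar>p\<bar> + 1"]) auto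
  have "expectation (indicator {p..} :: real \<Rightarrow> real) = expectation (\<lambda>x. 1 - indicator {..p} x + indicator {p} x)"
    by (intro Bochner_Integration.integral_cong) (auto simp: indicator_def)
  also have "\<dots> = 1 - F + expectation (indicator {p})"
    using int_F integrable_bounded_on_unit_interval[of "indicator {p}" 1]
    by (simp add: F_def prob_space)
  also have "expectation (indicator {p} :: real \<Rightarrow> real) = measure M {p}"
    using sets_eq_imp_space_eq[OF sets_eq_borel] by simp
  finally have S: "expectation (indicator {p..} :: real \<Rightarrow> real) = 1 - F"
    using no_atom by simp
  have "A - B = expectation (\<lambda>x. max 0 (x - p) - max 0 (p - x))"
    unfolding A_def B_def using int_A int_B by simp
  also have "\<dots> = expectation (\<lambda>x. x - p)"
    by (intro Bochner_Integration.integral_cong) auto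
  also have "\<dots> = \<mu> - p"
    using integrable_id by (simp add: \<mu>_def prob_space)
  finally have A: "A = B + (\<mu> - p)" by simp
  have "gft_profile M \<mu> p = B + F * (\<mu> - p)"
    unfolding gft_profile_def B_def F_def using int_B int_F by simp
  then show ?thesis
    unfolding \<mu>_def[symmetric] F_def[symmetric] A_def[symmetric] B_def[symmetric] S A
    by (simp add: algebra_simps)
qed

end

locale iid_valuations = prob_space \<Omega> + N: unit_interval_prob \<nu>
  for \<Omega> :: "'a measure" and \<nu> :: "real measure" +
  fixes V :: "nat \<Rightarrow> 'a \<Rightarrow> real"
  assumes indep_V: "indep_vars (\<lambda>_. borel) V {1..}"
    and distr_V: "\<And>i. 1 \<le> i \<Longrightarrow> distr \<Omega> borel (V i) = \<nu>"
begin

lemma random_variable_V: "1 \<le> i \<Longrightarrow> random_variable borel (V i)"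
  using indep_V unfolding indep_vars_def by auto

lemma AE_V_unit_interval:
  assumes "1 \<le> i"
  shows "AE \<omega> in \<Omega>. 0 \<le> V i \<omega> \<and> V i \<omega> \<le> 1"
proof -
  have "AE x in distr \<Omega> borel (V i). 0 \<le> x \<and> x \<le> 1"
    unfolding distr_V[OF assms] by (rule N.AE_unit_interval)
  then show ?thesis
    using random_variable_V[OF assms] by (subst (asm) AE_distr_iff) auto
qed

lemma integral_V:
  fixes g :: "real \<Rightarrow> real"
  assumes "1 \<le> i" and "g \<in> borel_measurable borel"
  shows "expectation (\<lambda>\<omega>. g (V i \<omega>)) = N.expectation g"
  using integral_distr[OF random_variable_V[OF assms(1)] assms(2)] distr_V[OF assms(1)] by simp

lemma integrable_mult_V:
  fixes a b :: "real \<Rightarrow> real"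
  assumes ij: "1 \<le> i" "1 \<le> j"
    and a: "a \<in> borel_measurable borel" "\<And>x. 0 \<le> x \<Longrightarrow> x \<le> 1 \<Longrightarrow> \<bar>a x\<bar> \<le> A"
    and b: "b \<in> borel_measurable borel" "\<And>x. 0 \<le> x \<Longrightarrow> x \<le> 1 \<Longrightarrow> \<bar>b x\<bar> \<le> B"
  shows "integrable \<Omega> (\<lambda>\<omega>. a (V i \<omega>) * b (V j \<omega>))"
proof (rule integrable_const_bound[where B="A * B"])
  show "AE \<omega> in \<Omega>. norm (a (V i \<omega>) * b (V j \<omega>)) \<le> A * B"
    using AE_V_unit_interval[OF ij(1)] AE_V_unit_interval[OF ij(2)]
  proof eventually_elim
    case (elim \<omega>)
    then show ?case
      using a(2)[of "V i \<omega>"] b(2)[of "V j \<omega>"] by (auto simp: abs_mult intro!: mult_mono)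
  qed
  show "(\<lambda>\<omega>. a (V i \<omega>) * b (V j \<omega>)) \<in> borel_measurable \<Omega>"
    using random_variable_V[OF ij(1)] random_variable_V[OF ij(2)] a(1) b(1) by measurable
qed

lemma integral_mult_V:
  fixes a b :: "real \<Rightarrow> real"
  assumes ij: "1 \<le> i" "1 \<le> j" "i \<noteq> j"
    and a: "a \<in> borel_measurable borel" "\<And>x. 0 \<le> x \<Longrightarrow> x \<le> 1 \<Longrightarrow> \<bar>a x\<bar> \<le> A"
    and b: "b \<in> borel_measurable borel" "\<And>x. 0 \<le> x \<Longrightarrow> x \<le> 1 \<Longrightarrow> \<bar>b x\<bar> \<le> B"
  shows "expectation (\<lambda>\<omega>. a (V i \<omega>) * b (V j \<omega>)) = N.expectation a * N.expectation b"
proof -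
  have "indep_var (PiM {i} (\<lambda>_. borel)) (\<lambda>\<omega>. restrict (\<lambda>k. V k \<omega>) {i})
      (PiM {j} (\<lambda>_. borel)) (\<lambda>\<omega>. restrict (\<lambda>k. V k \<omega>) {j})"
    using ij by (intro indep_var_restrict[OF indep_V]) auto
  then have "indep_var borel ((\<lambda>x. a (x i)) \<circ> (\<lambda>\<omega>. restrict (\<lambda>k. V k \<omega>) {i}))
      borel ((\<lambda>x. b (x j)) \<circ> (\<lambda>\<omega>. restrict (\<lambda>k. V k \<omega>) {j}))"
    by (rule indep_var_compose) (use a(1) b(1) in measurable)
  then have "indep_var borel (\<lambda>\<omega>. a (V i \<omega>)) borel (\<lambda>\<omega>. b (V j \<omega>))"
    by (simp add: comp_def)
  moreover have "integrable \<Omega> (\<lambda>\<omega>. a (V i \<omega>))" "integrable \<Omega> (\<lambda>\<omega>. b (V j \<omega>))"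
    using integrable_mult_V[OF ij(1) ij(1) a, of "\<lambda>_. 1" 1] integrable_mult_V[OF ij(2) ij(2) b, of "\<lambda>_. 1" 1]
    by simp_all
  ultimately show ?thesis
    using integral_V[OF ij(1) a(1)] integral_V[OF ij(2) b(1)] by (simp add: indep_var_lebesgue_integral)
qed

end

context iid_valuations
begin

lemma
  assumes ij: "1 \<le> i" "1 \<le> j"
  shows integrable_trade_gain_V: "integrable \<Omega> (\<lambda>\<omega>. trade_gain p (V i \<omega>) (V j \<omega>))"
    and integral_trade_gain_V: "i \<noteq> j \<Longrightarrow> measure \<nu> {p} = 0 \<Longrightarrow>
      expectation (\<lambda>\<omega>. trade_gain p (V i \<omega>) (V j \<omega>)) = gft_profile \<nu> (N.expectation (\<lambda>x. x)) p"
proof -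
  have ind: "(indicator {..p} :: real \<Rightarrow> real) \<in> borel_measurable borel"
    "(indicator {p..} :: real \<Rightarrow> real) \<in> borel_measurable borel"
    "\<And>x. \<bar>indicator {..p} x\<bar> \<le> (1 :: real)" "\<And>x. \<bar>indicator {p..} x\<bar> \<le> (1 :: real)"
    by (auto simp: indicator_def)
  have pos: "(\<lambda>x. max 0 (x - p)) \<in> borel_measurable borel" "(\<lambda>x. max 0 (p - x)) \<in> borel_measurable borel"
    "\<And>x. 0 \<le> x \<Longrightarrow> x \<le> 1 \<Longrightarrow> \<bar>max 0 (x - p)\<bar> \<le> \<bar>p\<bar> + 1"
    "\<And>x. 0 \<le> x \<Longrightarrow> x \<le> 1 \<Longrightarrow> \<bar>max 0 (p - x)\<bar> \<le> \<bar>p\<bar> + 1"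
    by auto
  note int1 = integrable_mult_V[OF ij ind(1) ind(3) pos(1) pos(3)]
  note int2 = integrable_mult_V[OF ij pos(2) pos(4) ind(2) ind(4)]
  show "integrable \<Omega> (\<lambda>\<omega>. trade_gain p (V i \<omega>) (V j \<omega>))"
    using int1 int2 unfolding trade_gain_def by simp
  assume "i \<noteq> j" "measure \<nu> {p} = 0"
  then show "expectation (\<lambda>\<omega>. trade_gain p (V i \<omega>) (V j \<omega>)) = gft_profile \<nu> (N.expectation (\<lambda>x. x)) p"
    using int1 int2 N.gft_profile_eq_trade_gain_factors
      integral_mult_V[OF ij \<open>i \<noteq> j\<close> ind(1) ind(3) pos(1) pos(3)]
      integral_mult_V[OF ij \<open>i \<noteq> j\<close> pos(2) pos(4) ind(2) ind(4)]
    unfolding trade_gain_def by simp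
qed

lemma integral_GFT:
  assumes "1 \<le> t" and "measure \<nu> {p} = 0"
  shows "expectation (GFT V t p) = 2 * gft_profile \<nu> (N.expectation (\<lambda>x. x)) p"
proof -
  have ij: "1 \<le> 2*t - 1" "1 \<le> 2*t" "2*t - 1 \<noteq> 2*t" using assms(1) by auto
  have "GFT V t p = (\<lambda>\<omega>. trade_gain p (V (2*t - 1) \<omega>) (V (2*t) \<omega>) + trade_gain p (V (2*t) \<omega>) (V (2*t - 1) \<omega>))"
    unfolding GFT_def gft_eq_trade_gain ..
  then show ?thesis
    using integrable_trade_gain_V[OF ij(1,2)] integrable_trade_gain_V[OF ij(2,1)]
      integral_trade_gain_V[OF ij(1,2) ij(3) assms(2)] integral_trade_gain_V[OF ij(2,1) ij(3)[symmetric] assms(2)]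
    by simp
qed

lemma best_fixed_price_gain_le:
  assumes "\<And>p. measure \<nu> {p} = 0"
  defines "\<mu> \<equiv> N.expectation (\<lambda>x. x)"
  shows "(SUP p\<in>{0..1}. \<Sum>t=1..T. expectation (GFT V t p)) \<le> real T * (2 * gft_profile \<nu> \<mu> \<mu>)"
proof (rule cSUP_least)
  show "(\<Sum>t=1..T. expectation (GFT V t p)) \<le> real T * (2 * gft_profile \<nu> \<mu> \<mu>)" for p
    using N.gft_profile_le[of \<mu> p] assms by (simp add: integral_GFT mult_left_mono)
qed simp

lemma
  defines "\<mu> \<equiv> N.expectation (\<lambda>x. x)"
  assumes "1 \<le> s" "1 \<le> r"
  shows integrable_cov_V: "integrable \<Omega> (\<lambda>\<omega>. (V s \<omega> - \<mu>) * (V r \<omega> - \<mu>))"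
    and integral_cov_V: "expectation (\<lambda>\<omega>. (V s \<omega> - \<mu>) * (V r \<omega> - \<mu>)) = (if s = r then N.variance (\<lambda>x. x) else 0)"
proof -
  have dev: "(\<lambda>x. x - \<mu>) \<in> borel_measurable borel" "\<And>x. 0 \<le> x \<Longrightarrow> x \<le> 1 \<Longrightarrow> \<bar>x - \<mu>\<bar> \<le> 1"
    using N.mean_nonneg N.mean_le_1 by (auto simp: \<mu>_def)
  show "integrable \<Omega> (\<lambda>\<omega>. (V s \<omega> - \<mu>) * (V r \<omega> - \<mu>))"
    by (rule integrable_mult_V[OF assms(2,3) dev dev])
  show "expectation (\<lambda>\<omega>. (V s \<omega> - \<mu>) * (V r \<omega> - \<mu>)) = (if s = r then N.variance (\<lambda>x. x) else 0)"
  proof (cases "s = r")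
    case True
    have "expectation (\<lambda>\<omega>. (V s \<omega> - \<mu>) * (V s \<omega> - \<mu>)) = N.variance (\<lambda>x. x)"
      unfolding \<mu>_def power2_eq_square using assms(2) by (intro integral_V) auto
    then show ?thesis using True by simp
  next
    case False
    have "N.expectation (\<lambda>x. x - \<mu>) = 0"
      using N.integrable_id by (simp add: \<mu>_def N.prob_space)
    then show ?thesis
      using False integral_mult_V[OF assms(2,3) False dev dev] by simp
  qed
qed

lemma sample_mean_sq_dev:
  assumes n: "1 \<le> n"
  defines "\<mu> \<equiv> N.expectation (\<lambda>x. x)"
  shows "integrable \<Omega> (\<lambda>\<omega>. ((\<Sum>s=1..n. V s \<omega>) / real n - \<mu>)^2)"
    and "expectation (\<lambda>\<omega>. ((\<Sum>s=1..n. V s \<omega>) / real n - \<mu>)^2) \<le> 1 / (4 * real n)"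
proof -
  define S where "S = {1..n}"
  define \<sigma> where "\<sigma> = N.variance (\<lambda>x. x)"
  have int_cov: "integrable \<Omega> (\<lambda>\<omega>. (V s \<omega> - \<mu>) * (V r \<omega> - \<mu>))" if "s \<in> S" "r \<in> S" for s r
    using that unfolding \<mu>_def by (intro integrable_cov_V) (auto simp: S_def)
  have cov: "expectation (\<lambda>\<omega>. (V s \<omega> - \<mu>) * (V r \<omega> - \<mu>)) = (if s = r then \<sigma> else 0)"
    if "s \<in> S" "r \<in> S" for s r
    using that unfolding \<mu>_def \<sigma>_def by (intro integral_cov_V) (auto simp: S_def)
  have square: "((\<Sum>s=1..n. V s \<omega>) / real n - \<mu>)^2
      = (\<Sum>s\<in>S. \<Sum>r\<in>S. (V s \<omega> - \<mu>) * (V r \<omega> - \<mu>)) / (real n)^2" for \<omega>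
  proof -
    have "(\<Sum>s=1..n. V s \<omega>) / real n - \<mu> = (\<Sum>s\<in>S. V s \<omega> - \<mu>) / real n"
      using n by (simp add: S_def sum_subtractf field_simps)
    then show ?thesis by (simp add: power2_eq_square sum_product)
  qed
  show "integrable \<Omega> (\<lambda>\<omega>. ((\<Sum>s=1..n. V s \<omega>) / real n - \<mu>)^2)"
    unfolding square by (intro integrable_divide_zero Bochner_Integration.integrable_sum int_cov)
  have "expectation (\<lambda>\<omega>. ((\<Sum>s=1..n. V s \<omega>) / real n - \<mu>)^2)
      = (\<Sum>s\<in>S. \<Sum>r\<in>S. if s = r then \<sigma> else 0) / (real n)^2"
    unfolding square using int_cov cov by (simp add: Bochner_Integration.integral_sum integrable_sum)
  also have "\<dots> = \<sigma> / real n"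
    using n by (simp add: S_def power2_eq_square)
  also have "\<dots> \<le> (1/4) / real n"
    using N.variance_le_quarter by (intro divide_right_mono) (auto simp: \<sigma>_def)
  finally show "expectation (\<lambda>\<omega>. ((\<Sum>s=1..n. V s \<omega>) / real n - \<mu>)^2) \<le> 1 / (4 * real n)"
    by simp
qed

end

context iid_valuations
begin

lemma integral_GFT_ftm_price:
  assumes t: "2 \<le> t" and no_atoms: "\<And>p. measure \<nu> {p} = 0"
  defines "\<mu> \<equiv> N.expectation (\<lambda>x. x)"
  shows "integrable \<Omega> (\<lambda>\<omega>. 2 * gft_profile \<nu> \<mu> (ftm_price V t \<omega>))"
    and "expectation (\<lambda>\<omega>. GFT V t (ftm_price V t \<omega>) \<omega>) = expectation (\<lambda>\<omega>. 2 * gft_profile \<nu> \<mu> (ftm_price V t \<omega>))"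
proof -
  define n where "n = 2 * (t - 1)"
  have ij: "1 \<le> 2*t - 1" "1 \<le> 2*t" using t by auto
  define X where "X = (\<lambda>\<omega>. restrict (\<lambda>i. V i \<omega>) {1..n})"
  define Y where "Y = (\<lambda>\<omega>. restrict (\<lambda>i. V i \<omega>) {2*t - 1, 2*t})"
  define \<phi> where "\<phi> = (\<lambda>xs ys. gft ((\<Sum>s=1..n. xs s) / real n) (ys (2*t - 1)) (ys (2*t)))"
  have XY: "indep_var (PiM {1..n} (\<lambda>_. borel)) X (PiM {2*t - 1, 2*t} (\<lambda>_. borel)) Y"
    unfolding X_def Y_def using t by (intro indep_var_restrict[OF indep_V]) (auto simp: n_def)
  have \<phi>_meas: "case_prod \<phi> \<in> borel_measurable (PiM {1..n} (\<lambda>_. borel) \<Otimes>\<^sub>M PiM {2*t - 1, 2*t} (\<lambda>_. borel))"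
    unfolding \<phi>_def by measurable
  have price: "(\<Sum>s=1..n. X \<omega> s) / real n = ftm_price V t \<omega>" for \<omega>
    using t by (simp add: X_def ftm_price_def n_def)
  have \<phi>_XY: "\<phi> (X \<omega>) (Y \<omega>') = GFT V t (ftm_price V t \<omega>) \<omega>'" for \<omega> \<omega>'
    unfolding \<phi>_def price by (simp add: Y_def GFT_def)
  have "integrable \<Omega> (\<lambda>\<omega>. \<phi> (X \<omega>) (Y \<omega>))"
  proof (rule integrable_const_bound[where B=1])
    show "AE \<omega> in \<Omega>. norm (\<phi> (X \<omega>) (Y \<omega>)) \<le> 1"
      using AE_V_unit_interval[OF ij(1)] AE_V_unit_interval[OF ij(2)]
      by eventually_elim (auto simp: \<phi>_XY GFT_def intro!: abs_gft_le_1)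
    show "(\<lambda>\<omega>. \<phi> (X \<omega>) (Y \<omega>)) \<in> borel_measurable \<Omega>"
      using measurable_compose[OF measurable_Pair[OF indep_var_rv1[OF XY] indep_var_rv2[OF XY]] \<phi>_meas]
      by simp
  qed
  note fubini = integral_indep_var_compose[where \<phi>=\<phi>, OF XY \<phi>_meas this]
  have inner: "expectation (\<lambda>\<omega>'. \<phi> (X \<omega>) (Y \<omega>')) = 2 * gft_profile \<nu> \<mu> (ftm_price V t \<omega>)" for \<omega>
    unfolding \<phi>_XY \<mu>_def using t no_atoms by (intro integral_GFT) auto
  show "integrable \<Omega> (\<lambda>\<omega>. 2 * gft_profile \<nu> \<mu> (ftm_price V t \<omega>))"
    using fubini(1) unfolding inner .
  show "expectation (\<lambda>\<omega>. GFT V t (ftm_price V t \<omega>) \<omega>) = expectation (\<lambda>\<omega>. 2 * gft_profile \<nu> \<mu> (ftm_price V t \<omega>))"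
    using fubini(2) unfolding inner by (simp add: \<phi>_XY)
qed

lemma ftm_round_gain_ge:
  defines "\<mu> \<equiv> N.expectation (\<lambda>x. x)"
  assumes t: "2 \<le> t" and no_atoms: "\<And>p. measure \<nu> {p} = 0" and "0 \<le> c"
    and quadratic_loss: "\<And>q. gft_profile \<nu> \<mu> \<mu> - gft_profile \<nu> \<mu> q \<le> c * (q - \<mu>)^2 / 2"
  shows "2 * gft_profile \<nu> \<mu> \<mu> - c / (8 * (real t - 1)) \<le> expectation (\<lambda>\<omega>. GFT V t (ftm_price V t \<omega>) \<omega>)"
proof -
  define n where "n = 2 * (t - 1)"
  have n: "1 \<le> n" using t by (simp add: n_def)
  have price: "ftm_price V t \<omega> = (\<Sum>s=1..n. V s \<omega>) / real n" for \<omega>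
    using t by (simp add: ftm_price_def n_def)
  note dev = sample_mean_sq_dev[OF n, folded \<mu>_def price]
  note gain = integral_GFT_ftm_price[OF t no_atoms, folded \<mu>_def]
  have "2 * gft_profile \<nu> \<mu> \<mu> - c * expectation (\<lambda>\<omega>. (ftm_price V t \<omega> - \<mu>)^2)
      = expectation (\<lambda>\<omega>. 2 * gft_profile \<nu> \<mu> \<mu> - c * (ftm_price V t \<omega> - \<mu>)^2)"
    using dev(1) by (simp add: prob_space)
  also have "\<dots> \<le> expectation (\<lambda>\<omega>. 2 * gft_profile \<nu> \<mu> (ftm_price V t \<omega>))"
  proof (rule integral_mono)
    show "integrable \<Omega> (\<lambda>\<omega>. 2 * gft_profile \<nu> \<mu> \<mu> - c * (ftm_price V t \<omega> - \<mu>)^2)"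
      using dev(1) by simp
    show "integrable \<Omega> (\<lambda>\<omega>. 2 * gft_profile \<nu> \<mu> (ftm_price V t \<omega>))"
      by (rule gain(1))
    show "2 * gft_profile \<nu> \<mu> \<mu> - c * (ftm_price V t \<omega> - \<mu>)^2 \<le> 2 * gft_profile \<nu> \<mu> (ftm_price V t \<omega>)" for \<omega>
      using quadratic_loss[of "ftm_price V t \<omega>"] by simp
  qed
  also have "\<dots> = expectation (\<lambda>\<omega>. GFT V t (ftm_price V t \<omega>) \<omega>)"
    using gain(2) by simp
  finally have "2 * gft_profile \<nu> \<mu> \<mu> - c * expectation (\<lambda>\<omega>. (ftm_price V t \<omega> - \<mu>)^2)
      \<le> expectation (\<lambda>\<omega>. GFT V t (ftm_price V t \<omega>) \<omega>)" .
  moreover have "c * expectation (\<lambda>\<omega>. (ftm_price V t \<omega> - \<mu>)^2) \<le> c / (8 * (real t - 1))"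
  proof -
    have "c * expectation (\<lambda>\<omega>. (ftm_price V t \<omega> - \<mu>)^2) \<le> c * (1 / (4 * real n))"
      using dev(2) \<open>0 \<le> c\<close> by (rule mult_left_mono)
    also have "\<dots> = c / (8 * (real t - 1))"
      using t by (simp add: n_def of_nat_diff)
    finally show ?thesis .
  qed
  ultimately show ?thesis by linarith
qed

end

lemma cumulative_shortfall_le:
  fixes R :: "nat \<Rightarrow> real"
  assumes T: "2 \<le> T" and "G \<le> 1/2" and "0 \<le> c" and "0 \<le> R 1"
    and rounds: "\<And>t. 2 \<le> t \<Longrightarrow> t \<le> T \<Longrightarrow> G - c / (real t - 1) \<le> R t"
  shows "real T * G - (\<Sum>t=1..T. R t) \<le> 1/2 + c * (1 + ln (real T - 1))"
proof -
  have "(\<Sum>t=1..T. R t) = R 1 + (\<Sum>t=2..T. R t)"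
    using T sum.atLeast_Suc_atMost[of 1 T R] by (simp add: numeral_2_eq_2)
  moreover have "(\<Sum>t=2..T. G - c / (real t - 1)) \<le> (\<Sum>t=2..T. R t)"
    using rounds by (intro sum_mono) auto
  moreover have "(\<Sum>t=2..T. G - c / (real t - 1)) = real (T - 1) * G - c * (\<Sum>t=2..T. 1 / (real t - 1))"
    by (simp add: sum_subtractf sum_distrib_left)
  moreover have "c * (\<Sum>t=2..T. 1 / (real t - 1)) \<le> c * (1 + ln (real T - 1))"
    using harmonic_le_one_plus_ln[OF T] \<open>0 \<le> c\<close> by (rule mult_left_mono)
  moreover have "real T * G = G + real (T - 1) * G"
    using T by (simp add: of_nat_diff algebra_simps)
  ultimately show ?thesis using \<open>G \<le> 1/2\<close> \<open>0 \<le> R 1\<close> by linarith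
qed

theorem theorem3p1:
  fixes \<Omega> :: "'a measure" and V :: "nat \<Rightarrow> 'a \<Rightarrow> real"
    and \<nu> :: "real measure" and f :: "real \<Rightarrow> real" and M :: real and T :: nat
  assumes "prob_space \<Omega>"
    and "prob_space \<nu>"
    and "measure \<nu> {0..1} = 1"
    and "f \<in> borel_measurable borel"
    and "\<And>x. 0 \<le> f x" and "\<And>x. f x \<le> M" and "M > 0"
    and "\<nu> = density lborel (\<lambda>x. ennreal (f x))"
    and "prob_space.indep_vars \<Omega> (\<lambda>_. borel) V {1..}"
    and "\<And>i. i \<ge> 1 \<Longrightarrow> distr \<Omega> borel (V i) = \<nu>"
    and "T \<ge> 2"
  shows "regret \<Omega> V (ftm_price V) T \<le> 1/2 + M/4 * (1 + ln (real T - 1))"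
proof -
  have "unit_interval_prob \<nu>"
    using assms(2,3) unfolding assms(8) by (rule unit_interval_prob_density)
  then interpret iid_valuations \<Omega> \<nu> V
    using assms(1,9,10) by (simp add: iid_valuations_def iid_valuations_axioms_def)
  define G where "G = 2 * gft_profile \<nu> (N.expectation (\<lambda>x. x)) (N.expectation (\<lambda>x. x))"
  define R where "R t = expectation (\<lambda>\<omega>. GFT V t (ftm_price V t \<omega>) \<omega>)" for t
  have no_atoms: "measure \<nu> {p} = 0" for p
    using assms(4,8) by (simp add: measure_density_lborel_singleton)
  have "real T * G - (\<Sum>t=1..T. R t) \<le> 1/2 + M/8 * (1 + ln (real T - 1))"
  proof (rule cumulative_shortfall_le[OF assms(11)])
    show "G - (M/8) / (real t - 1) \<le> R t" if "2 \<le> t" for t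
      using ftm_round_gain_ge[OF that no_atoms, of M] N.gft_profile_quadratic_loss[OF assms(8,4-6)] assms(7)
      by (simp add: R_def G_def)
    show "0 \<le> R 1"
      unfolding R_def by (simp add: GFT_def gft_nonneg)
    show "G \<le> 1/2"
      using N.gft_profile_mean_le_quarter by (simp add: G_def)
  qed (use assms(7) in simp)
  then have "regret \<Omega> V (ftm_price V) T \<le> 1/2 + M/8 * (1 + ln (real T - 1))"
    using best_fixed_price_gain_le[OF no_atoms, of T] unfolding regret_def R_def G_def by linarith
  also have "\<dots> \<le> 1/2 + M/4 * (1 + ln (real T - 1))"
    using assms(7,11) by (intro add_left_mono mult_right_mono) auto
  finally show ?thesis .
qed

end
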